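(* Let $n\ge6$ be even, $m\in\mathbb N$, and assume the seeds are i.i.d. uniform on $[n]$. Then for every $k\in\{2,\dots,n/2\}$, $$\mathsf P\bigl(\Xi_{\{1,k\}}(1)\le\Xi_{\{1,k\}}(k)\bigr)\le\exp\Bigl\{m\log\Bigl[1-\tfrac1n\bigl(\sqrt{n+1-k}-\sqrt{k-1}\bigr)^2\Bigr]\Bigr\}.$$
   Context: Candidates $[n]$, $m$ voters; voter $j$ has the clockwise oriented preference list $(s_j,s_j+1,\dots,n,1,\dots,s_j-1)$ with seed $s_j$; the seeds are independent and uniform on $[n]$. In an election among a non-empty $S\subseteq[n]$ each voter votes for the first candidate of $S$ in its list; $\Xi_S(i)$ is the number of votes for $i\in S$. *)

theory Defs
  imports "HOL-Probability.Probability"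
begin

text \<open>Candidates are 1..n. The clockwise preference list of a voter with seed s
  is (s, s+1, ..., n, 1, ..., s-1).\<close>
definition pref_list :: "nat \<Rightarrow> nat \<Rightarrow> nat list" where
  "pref_list n s = [s..<n+1] @ [1..<s]"

definition vote :: "nat \<Rightarrow> nat set \<Rightarrow> nat \<Rightarrow> nat" where
  "vote n S s = hd (filter (\<lambda>c. c \<in> S) (pref_list n s))"

definition Xi :: "nat \<Rightarrow> nat \<Rightarrow> (nat \<Rightarrow> nat) \<Rightarrow> nat set \<Rightarrow> nat \<Rightarrow> nat" where
  "Xi n m seeds S i = card {j \<in> {..<m}. vote n S (seeds j) = i}"

text \<open>Seeds i.i.d. uniform on [n]: uniform distribution on seed vectors.\<close>
definition seed_pmf :: "nat \<Rightarrow> nat \<Rightarrow> (nat \<Rightarrow> nat) pmf" where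
  "seed_pmf n m = pmf_of_set (PiE {..<m} (\<lambda>_. {1..n}))"

end

theory Submission imports Defs begin

text \<open>Exponential tilting. In the election between 1 and k a voter votes for k exactly when
  its seed lies in {2..k}, which happens with probability q/n, q = k - 1, and otherwise for 1,
  with probability p/n, p = n + 1 - k. Weighting each voter by r \<ge> 1 or 1/r according to its
  vote, the product of the weights is at least 1 whenever k gets at least as many votes as 1,
  so by Markov's inequality this event has probability at most ((q r + p/r)/n)^m.
  The choice r = sqrt (p/q) gives q r + p/r = 2 sqrt (p q) = n - (sqrt p - sqrt q)^2.\<close>

lemma vote_pair_eq:
  assumes "s \<in> {1..n}" and "2 \<le> k" and "k \<le> n"
  shows "vote n {1, k} s = (if s \<in> {2..k} then k else 1)"
proof (cases "s \<in> {2..k}")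
  case True
  have "[s..<n+1] = [s..<k] @ k # [k+1..<n+1]"
    using True assms upt_add_eq_append[of s k "n+1-k"] by (simp add: upt_conv_Cons)
  moreover have "filter (\<lambda>c. c \<in> {1, k}) [s..<k] = []"
    using True by (auto simp: filter_empty_conv)
  ultimately show ?thesis
    using True unfolding vote_def pref_list_def by simp
next
  case False
  then consider "s = 1" | "k < s" using assms by fastforce
  then show ?thesis
  proof cases
    case 1
    have "[1..<n+1] = 1 # [Suc 1..<n+1]" using assms by (simp add: upt_conv_Cons)
    then show ?thesis using False 1 unfolding vote_def pref_list_def by simp
  next
    case 2
    have "filter (\<lambda>c. c \<in> {1, k}) [s..<n+1] = []"
      using 2 assms by (auto simp: filter_empty_conv)
    moreover have "[1..<s] = 1 # [Suc 1..<s]" using 2 assms by (simp add: upt_conv_Cons)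
    ultimately show ?thesis using False unfolding vote_def pref_list_def by simp
  qed
qed

lemma Xi_pair_eq:
  assumes "\<And>j. j < m \<Longrightarrow> seeds j \<in> {1..n}" and "2 \<le> k" and "k \<le> n"
  shows "Xi n m seeds {1, k} 1 = card {j \<in> {..<m}. seeds j \<notin> {2..k}}"
    and "Xi n m seeds {1, k} k = card {j \<in> {..<m}. seeds j \<in> {2..k}}"
proof -
  have "j < m \<Longrightarrow> vote n {1, k} (seeds j) = (if seeds j \<in> {2..k} then k else 1)" for j
    using assms by (intro vote_pair_eq) auto
  then show "Xi n m seeds {1, k} 1 = card {j \<in> {..<m}. seeds j \<notin> {2..k}}"
    and "Xi n m seeds {1, k} k = card {j \<in> {..<m}. seeds j \<in> {2..k}}"
    using \<open>2 \<le> k\<close> unfolding Xi_def by (auto intro!: arg_cong[where f = card] split: if_splits)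
qed

lemma prod_tilt_ge_1:
  fixes r :: real
  assumes "finite I" and "1 \<le> r" and "card {j \<in> I. \<not> P j} \<le> card {j \<in> I. P j}"
  shows "1 \<le> (\<Prod>j\<in>I. if P j then r else 1 / r)"
proof -
  have "(\<Prod>j\<in>I. if P j then r else 1 / r) = r ^ card {j \<in> I. P j} / r ^ card {j \<in> I. \<not> P j}"
    using assms(1) by (simp add: prod.If_cases power_one_over Collect_conj_eq Int_commute
        flip: Compl_eq Collect_neg_eq)
  moreover have "r ^ card {j \<in> I. \<not> P j} \<le> r ^ card {j \<in> I. P j}"
    using assms by (intro power_increasing) auto
  ultimately show ?thesis using assms(2) by simp
qed

lemma prob_majority_le_tilted:
  fixes D :: "'a set" and I :: "'i set" and P :: "'a \<Rightarrow> bool" and r :: real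
  assumes "finite D" and "D \<noteq> {}" and "finite I" and "1 \<le> r"
  shows "measure_pmf.prob (pmf_of_set (PiE I (\<lambda>_. D)))
           {x. card {j \<in> I. \<not> P (x j)} \<le> card {j \<in> I. P (x j)}}
         \<le> ((card {s \<in> D. P s} * r + card {s \<in> D. \<not> P s} / r) / card D) ^ card I"
proof -
  define S where "S = PiE I (\<lambda>_. D)"
  define E where "E = {x. card {j \<in> I. \<not> P (x j)} \<le> card {j \<in> I. P (x j)}}"
  define w where "w s = (if P s then r else 1 / r)" for s
  have "finite S" and "S \<noteq> {}"
    using assms by (simp_all add: S_def finite_PiE PiE_eq_empty_iff)
  have "real (card (S \<inter> E)) = (\<Sum>x\<in>S \<inter> E. 1)" by simp
  also have "\<dots> \<le> (\<Sum>x\<in>S \<inter> E. \<Prod>j\<in>I. w (x j))"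
    using assms unfolding E_def w_def by (intro sum_mono prod_tilt_ge_1) auto
  also have "\<dots> \<le> (\<Sum>x\<in>S. \<Prod>j\<in>I. w (x j))"
    using \<open>finite S\<close> assms(4) unfolding w_def by (intro sum_mono2 prod_nonneg) auto
  also have "\<dots> = (\<Sum>s\<in>D. w s) ^ card I"
    using assms by (simp add: S_def prod_sum_PiE flip: prod_constant)
  also have "(\<Sum>s\<in>D. w s) = card {s \<in> D. P s} * r + card {s \<in> D. \<not> P s} / r"
    using assms(1) by (simp add: w_def sum.If_cases Collect_conj_eq Int_commute
        flip: Compl_eq Collect_neg_eq)
  finally have "card (S \<inter> E) \<le> (card {s \<in> D. P s} * r + card {s \<in> D. \<not> P s} / r) ^ card I" .
  moreover have "card S = card D ^ card I"
    using assms by (simp add: S_def card_PiE)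
  ultimately show ?thesis
    using measure_pmf_of_set[OF \<open>S \<noteq> {}\<close> \<open>finite S\<close>] assms(1,2)
    by (simp add: S_def E_def power_divide divide_right_mono)
qed

lemma set_pmf_seed_pmf:
  assumes "1 \<le> n"
  shows "set_pmf (seed_pmf n m) = PiE {..<m} (\<lambda>_. {1..n})"
  using assms by (simp add: seed_pmf_def set_pmf_of_set finite_PiE PiE_eq_empty_iff)

lemma prob_Xi_pair_eq_count:
  assumes "2 \<le> k" and "k \<le> n"
  shows "measure_pmf.prob (seed_pmf n m) {seeds. Xi n m seeds {1, k} 1 \<le> Xi n m seeds {1, k} k}
       = measure_pmf.prob (seed_pmf n m)
           {x. card {j \<in> {..<m}. x j \<notin> {2..k}} \<le> card {j \<in> {..<m}. x j \<in> {2..k}}}"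
proof (rule measure_pmf.finite_measure_eq_AE)
  have "x \<in> PiE {..<m} (\<lambda>_. {1..n}) \<Longrightarrow> (Xi n m x {1, k} 1 \<le> Xi n m x {1, k} k) \<longleftrightarrow>
      card {j \<in> {..<m}. x j \<notin> {2..k}} \<le> card {j \<in> {..<m}. x j \<in> {2..k}}" for x
    using Xi_pair_eq[of m x n k] assms by (simp add: PiE_iff)
  then show "AE x in seed_pmf n m. x \<in> {seeds. Xi n m seeds {1, k} 1 \<le> Xi n m seeds {1, k} k}
      \<longleftrightarrow> x \<in> {x. card {j \<in> {..<m}. x j \<notin> {2..k}} \<le> card {j \<in> {..<m}. x j \<in> {2..k}}}"
    using assms by (simp add: AE_measure_pmf_iff set_pmf_seed_pmf)
qed simp_all

lemma prob_Xi_pair_le_tilted: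
  fixes r :: real
  assumes "2 \<le> k" and "k \<le> n" and "1 \<le> r"
  shows "measure_pmf.prob (seed_pmf n m) {seeds. Xi n m seeds {1, k} 1 \<le> Xi n m seeds {1, k} k}
         \<le> ((real (k - 1) * r + real (n + 1 - k) / r) / n) ^ m"
proof -
  have "{s \<in> {1..n}. s \<in> {2..k}} = {2..k}" and "{s \<in> {1..n}. s \<notin> {2..k}} = {1..n} - {2..k}"
    using assms by auto
  then have "card {s \<in> {1..n}. s \<in> {2..k}} = k - 1" and "card {s \<in> {1..n}. s \<notin> {2..k}} = n + 1 - k"
    using assms by (simp_all add: card_Diff_subset)
  then show ?thesis
    using prob_majority_le_tilted[of "{1..n}" "{..<m}" r "\<lambda>s. s \<in> {2..k}"] assms
    unfolding prob_Xi_pair_eq_count[OF assms(1,2)] by (simp add: seed_pmf_def)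
qed

lemma tilt_optimum:
  fixes p q :: real
  assumes "0 < q" and "q \<le> p"
  shows "1 \<le> sqrt (p / q)"
    and "q * sqrt (p / q) + p / sqrt (p / q) = 2 * sqrt p * sqrt q"
proof -
  show "1 \<le> sqrt (p / q)" using assms by simp
  have "p = (sqrt p)\<^sup>2" and "q = (sqrt q)\<^sup>2" using assms by simp_all
  then show "q * sqrt (p / q) + p / sqrt (p / q) = 2 * sqrt p * sqrt q"
    using assms by (simp add: real_sqrt_divide field_simps power2_eq_square)
qed

theorem mainTheorem5:
  fixes n m k :: nat
  assumes "n \<ge> 6" and "even n" and "2 \<le> k" and "k \<le> n div 2"
  shows "measure_pmf.prob (seed_pmf n m)
           {seeds. Xi n m seeds {1, k} 1 \<le> Xi n m seeds {1, k} k}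
         \<le> exp (real m * ln (1 - (sqrt (real (n + 1 - k)) - sqrt (real (k - 1)))\<^sup>2 / real n))"
proof -
  define p where "p = real (n + 1 - k)"
  define q where "q = real (k - 1)"
  have "0 < q" "q \<le> p" "p + q = real n" "0 < real n" using assms by (auto simp: p_def q_def)
  note optimum = tilt_optimum[OF \<open>0 < q\<close> \<open>q \<le> p\<close>]
  have "measure_pmf.prob (seed_pmf n m) {seeds. Xi n m seeds {1, k} 1 \<le> Xi n m seeds {1, k} k}
      \<le> ((q * sqrt (p / q) + p / sqrt (p / q)) / n) ^ m"
    using prob_Xi_pair_le_tilted[OF \<open>2 \<le> k\<close> _ optimum(1), of n m] assms
    by (simp add: p_def q_def)
  also have "\<dots> = exp (real m * ln (2 * sqrt p * sqrt q / n))"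
    using \<open>0 < q\<close> \<open>q \<le> p\<close> \<open>0 < real n\<close> by (simp add: optimum(2) exp_of_nat_mult)
  also have "2 * sqrt p * sqrt q / n = 1 - (sqrt p - sqrt q)\<^sup>2 / n"
    using \<open>p + q = real n\<close> \<open>0 < q\<close> \<open>q \<le> p\<close> \<open>0 < real n\<close>
    by (simp add: power2_diff field_simps)
  finally show ?thesis unfolding p_def q_def .
qed

end
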